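(* Let $C=\mathbb{C}\langle x,y,z\rangle/(x^2,y^2,z^2,[\{x,y\},z],[\{y,z\},x])$, let $\lambda$ be a primitive $n$th root of unity, and let $\mathbb{Z}_n=\langle\sigma\rangle$ act on $C$ by $\sigma(x)=\lambda^{-1}x$, $\sigma(y)=y$, $\sigma(z)=\lambda z$. In the smash product $C\#\mathbb{Z}_n$ put $x'=x\#1$ and $z'=z\#\sigma^{-1}$. Then $(x'z'+z'x')^n$ belongs to the center of $C\#\mathbb{Z}_n$.
   Context: $\{a,b\}=ab+ba$, $[a,b]=ab-ba$. The smash product $C\#\mathbb{Z}_n$ is $C\otimes\mathbb{C}\mathbb{Z}_n$ with multiplication $(a\#\sigma^i)(b\#\sigma^j)=a\,\sigma^i(b)\#\sigma^{i+j}$. *)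

theory Defs
  imports Complex_Main
begin

text \<open>Free algebra C<x,y,z>: noncommutative polynomials, represented as
  finitely supported coefficient functions on words over the alphabet {X,Y,Z}.\<close>

datatype gen = X | Y | Z

type_synonym ncpoly = "gen list \<Rightarrow> complex"

definition is_ncpoly :: "ncpoly \<Rightarrow> bool" where
  "is_ncpoly p \<longleftrightarrow> finite {w. p w \<noteq> 0}"

definition ncp_zero :: ncpoly where "ncp_zero = (\<lambda>w. 0)"
definition ncp_one :: ncpoly where "ncp_one = (\<lambda>w. if w = [] then 1 else 0)"
definition ncp_var :: "gen \<Rightarrow> ncpoly" where "ncp_var g = (\<lambda>w. if w = [g] then 1 else 0)"
definition ncp_add :: "ncpoly \<Rightarrow> ncpoly \<Rightarrow> ncpoly" where "ncp_add p q = (\<lambda>w. p w + q w)"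
definition ncp_diff :: "ncpoly \<Rightarrow> ncpoly \<Rightarrow> ncpoly" where "ncp_diff p q = (\<lambda>w. p w - q w)"

definition ncp_mul :: "ncpoly \<Rightarrow> ncpoly \<Rightarrow> ncpoly" where
  "ncp_mul p q = (\<lambda>w. \<Sum>k\<le>length w. p (take k w) * q (drop k w))"

definition anticomm :: "ncpoly \<Rightarrow> ncpoly \<Rightarrow> ncpoly" where
  "anticomm a b = ncp_add (ncp_mul a b) (ncp_mul b a)"
definition comm :: "ncpoly \<Rightarrow> ncpoly \<Rightarrow> ncpoly" where
  "comm a b = ncp_diff (ncp_mul a b) (ncp_mul b a)"

definition C_rels :: "ncpoly set" where
  "C_rels = {ncp_mul (ncp_var X) (ncp_var X), ncp_mul (ncp_var Y) (ncp_var Y),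
             ncp_mul (ncp_var Z) (ncp_var Z),
             comm (anticomm (ncp_var X) (ncp_var Y)) (ncp_var Z),
             comm (anticomm (ncp_var Y) (ncp_var Z)) (ncp_var X)}"

inductive_set C_ideal :: "ncpoly set" where
  gen: "r \<in> C_rels \<Longrightarrow> r \<in> C_ideal"
| zero: "ncp_zero \<in> C_ideal"
| add: "a \<in> C_ideal \<Longrightarrow> b \<in> C_ideal \<Longrightarrow> ncp_add a b \<in> C_ideal"
| lmul: "a \<in> C_ideal \<Longrightarrow> is_ncpoly p \<Longrightarrow> ncp_mul p a \<in> C_ideal"
| rmul: "a \<in> C_ideal \<Longrightarrow> is_ncpoly p \<Longrightarrow> ncp_mul a p \<in> C_ideal"

text \<open>sigma^i acting on representatives: x |-> lam^-1 x, y |-> y, z |-> lam z.\<close>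
definition sigma_pow :: "complex \<Rightarrow> nat \<Rightarrow> ncpoly \<Rightarrow> ncpoly" where
  "sigma_pow lam i p = (\<lambda>w. lam powi (int i * (int (count_list w Z) - int (count_list w X))) * p w)"

text \<open>Smash product C # Z_n: an element sum_k a_k # sigma^k is represented by the
  family k |-> a_k (representatives in C<x,y,z>), with a_k = 0 for k >= n.\<close>
type_synonym smash = "nat \<Rightarrow> ncpoly"

definition sm_elem :: "nat \<Rightarrow> smash \<Rightarrow> bool" where
  "sm_elem n P \<longleftrightarrow> (\<forall>k. is_ncpoly (P k)) \<and> (\<forall>k\<ge>n. P k = ncp_zero)"

definition sm_add :: "smash \<Rightarrow> smash \<Rightarrow> smash" where
  "sm_add P Q = (\<lambda>k. ncp_add (P k) (Q k))"

definition sm_mul :: "nat \<Rightarrow> complex \<Rightarrow> smash \<Rightarrow> smash \<Rightarrow> smash" where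
  "sm_mul n lam P Q = (\<lambda>k. if k < n then
      (\<lambda>w. \<Sum>i<n. \<Sum>j\<in>{j. j < n \<and> (i + j) mod n = k}.
              ncp_mul (P i) (sigma_pow lam i (Q j)) w)
    else ncp_zero)"

definition sm_one :: smash where
  "sm_one = (\<lambda>k. if k = 0 then ncp_one else ncp_zero)"

primrec sm_pow :: "nat \<Rightarrow> complex \<Rightarrow> smash \<Rightarrow> nat \<Rightarrow> smash" where
  "sm_pow n lam P 0 = sm_one"
| "sm_pow n lam P (Suc m) = sm_mul n lam (sm_pow n lam P m) P"

text \<open>Equality in C # Z_n (= C/I tensor CZ_n): componentwise congruence modulo the ideal.\<close>
definition sm_eq :: "nat \<Rightarrow> smash \<Rightarrow> smash \<Rightarrow> bool" where
  "sm_eq n P Q \<longleftrightarrow> (\<forall>k<n. ncp_diff (P k) (Q k) \<in> C_ideal)"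

definition sm_center :: "nat \<Rightarrow> complex \<Rightarrow> smash \<Rightarrow> bool" where
  "sm_center n lam W \<longleftrightarrow> (\<forall>Q. sm_elem n Q \<longrightarrow> sm_eq n (sm_mul n lam W Q) (sm_mul n lam Q W))"

definition x' :: smash where
  "x' = (\<lambda>k. if k = 0 then ncp_var X else ncp_zero)"

text \<open>z' = z # sigma^{-1} = z # sigma^{n-1}.\<close>
definition z' :: "nat \<Rightarrow> smash" where
  "z' n = (\<lambda>k. if k = n - 1 then ncp_var Z else ncp_zero)"

end

theory Submission
  imports Defs
begin

text \<open>Modulo the relations, \<open>e = xz + zx\<close> is central in \<open>C\<close>: it commutes with \<open>x\<close> and \<open>z\<close>
  because \<open>x\<^sup>2 = z\<^sup>2 = 0\<close>, and with \<open>y\<close> because \<open>[e, y]\<close> is minus the sum of the two commutator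
  relations. In the smash product, \<open>x'z' + z'x' = u # \<sigma>\<^sup>-\<^sup>1\<close> with \<open>u = xz + \<lambda> zx\<close>. Since \<open>u\<close> is
  \<open>\<sigma>\<close>-invariant, \<open>(u # \<sigma>\<^sup>-\<^sup>1)\<^sup>n = u\<^sup>n # 1\<close>, and because \<open>xz\<close> and \<open>zx\<close> annihilate each other,
  \<open>u\<^sup>n = (xz)\<^sup>n + \<lambda>\<^sup>n (zx)\<^sup>n = e\<^sup>n\<close>. Finally \<open>c # 1\<close> is central in \<open>C # \<int>\<^sub>n\<close> whenever \<open>c\<close> is central
  in \<open>C\<close> and \<open>\<sigma>\<close>-invariant.\<close>

section \<open>The free algebra\<close>

lemma ncp_mul_Nil [simp]: "ncp_mul p q [] = p [] * q []"
  by (simp add: ncp_mul_def)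

lemma ncp_mul_Cons: "ncp_mul p q (a # w) = p [] * q (a # w) + ncp_mul (\<lambda>v. p (a # v)) q w"
  unfolding ncp_mul_def length_Cons sum.atMost_Suc_shift by simp

lemma ncp_mul_add_left: "ncp_mul (\<lambda>v. f v + g v) r w = ncp_mul f r w + ncp_mul g r w"
  unfolding ncp_mul_def by (simp add: sum.distrib algebra_simps)

lemma ncp_mul_add_right: "ncp_mul r (\<lambda>v. f v + g v) w = ncp_mul r f w + ncp_mul r g w"
  unfolding ncp_mul_def by (simp add: sum.distrib algebra_simps)

lemma ncp_mul_diff_left: "ncp_mul (\<lambda>v. f v - g v) r w = ncp_mul f r w - ncp_mul g r w"
  unfolding ncp_mul_def by (simp add: sum_subtractf algebra_simps)

lemma ncp_mul_diff_right: "ncp_mul r (\<lambda>v. f v - g v) w = ncp_mul r f w - ncp_mul r g w"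
  unfolding ncp_mul_def by (simp add: sum_subtractf algebra_simps)

lemma ncp_mul_scale_left: "ncp_mul (\<lambda>v. c * f v) r = (\<lambda>w. c * ncp_mul f r w)"
  unfolding ncp_mul_def by (simp add: sum_distrib_left algebra_simps)

lemma ncp_mul_scale_right: "ncp_mul r (\<lambda>v. c * f v) = (\<lambda>w. c * ncp_mul r f w)"
  unfolding ncp_mul_def by (simp add: sum_distrib_left algebra_simps)

lemma ncp_mul_zero_left [simp]: "ncp_mul (\<lambda>v. 0) r w = 0"
  by (simp add: ncp_mul_def)

lemma ncp_mul_zero_right [simp]: "ncp_mul r (\<lambda>v. 0) w = 0"
  by (simp add: ncp_mul_def)

lemma ncp_mul_assoc: "ncp_mul (ncp_mul p q) r = ncp_mul p (ncp_mul q r)"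
proof
  show "ncp_mul (ncp_mul p q) r w = ncp_mul p (ncp_mul q r) w" for w
  proof (induction w arbitrary: p q r)
    case (Cons a w)
    have tail: "(\<lambda>v. ncp_mul p q (a # v)) = (\<lambda>v. p [] * q (a # v) + ncp_mul (\<lambda>v. p (a # v)) q v)"
      by (simp add: ncp_mul_Cons)
    show ?case
      apply (subst ncp_mul_Cons)
      apply (subst (2) ncp_mul_Cons)
      apply (subst ncp_mul_Cons)
      unfolding tail ncp_mul_add_left ncp_mul_scale_left Cons.IH
      by (simp add: algebra_simps ncp_mul_Cons)
  qed simp
qed

lemma ncp_mul_one_left: "ncp_mul ncp_one q = q"
proof
  show "ncp_mul ncp_one q w = q w" for w
    by (cases w) (simp_all add: ncp_mul_Cons ncp_one_def)
qed

lemma ncp_mul_one_right: "ncp_mul p ncp_one = p"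
proof
  show "ncp_mul p ncp_one w = p w" for w
    by (induction w arbitrary: p) (simp_all add: ncp_mul_Cons ncp_one_def)
qed

lemma ncp_mul_var_left:
  "ncp_mul (ncp_var g) q w = (case w of [] \<Rightarrow> 0 | b # v \<Rightarrow> if b = g then q v else 0)"
proof (cases w)
  case (Cons b v)
  have "(\<lambda>u. ncp_var g (b # u)) = (if b = g then ncp_one else (\<lambda>u. 0))"
    by (auto simp: ncp_var_def ncp_one_def)
  then show ?thesis using Cons by (simp add: ncp_mul_Cons ncp_var_def ncp_mul_one_left)
qed (simp add: ncp_var_def)

lemma ncp_mul_nonzeroD: "ncp_mul p q w \<noteq> 0 \<Longrightarrow> \<exists>k. p (take k w) \<noteq> 0 \<and> q (drop k w) \<noteq> 0"
  unfolding ncp_mul_def by (metis (mono_tags, lifting) mult_eq_0_iff sum.neutral)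

definition ncp_const :: "complex \<Rightarrow> ncpoly" where
  "ncp_const c = (\<lambda>w. if w = [] then c else 0)"

lemma ncp_one_eq_const: "ncp_one = ncp_const 1"
  by (simp add: ncp_one_def ncp_const_def)

lemma ncp_mul_const_left: "ncp_mul (ncp_const c) q = (\<lambda>w. c * q w)"
proof
  show "ncp_mul (ncp_const c) q w = c * q w" for w
    by (cases w) (simp_all add: ncp_mul_Cons ncp_const_def)
qed

lemma ncp_mul_const_right: "ncp_mul p (ncp_const c) w = p w * c"
  by (induction w arbitrary: p) (simp_all add: ncp_mul_Cons ncp_const_def)

definition ncp_monom :: "gen list \<Rightarrow> ncpoly" where
  "ncp_monom u = (\<lambda>w. if w = u then 1 else 0)"

lemma ncp_monom_Nil: "ncp_monom [] = ncp_one"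
  by (simp add: ncp_monom_def ncp_one_def)

lemma ncp_monom_Cons: "ncp_monom (g # u) = ncp_mul (ncp_var g) (ncp_monom u)"
  by (auto simp: fun_eq_iff ncp_monom_def ncp_mul_var_left split: list.splits)

lemma ncp_var_eq_monom: "ncp_var g = ncp_monom [g]"
  by (simp add: ncp_var_def ncp_monom_def)

lemma ncp_monom_pair: "ncp_monom [g, h] = ncp_mul (ncp_var g) (ncp_var h)"
  by (simp only: ncp_monom_Cons[of g "[h]"] ncp_var_eq_monom)

lemma is_ncpoly_mul: "is_ncpoly p \<Longrightarrow> is_ncpoly q \<Longrightarrow> is_ncpoly (ncp_mul p q)"
proof -
  assume p: "is_ncpoly p" and q: "is_ncpoly q"
  have "{w. ncp_mul p q w \<noteq> 0} \<subseteq> (\<lambda>(a, b). a @ b) ` ({w. p w \<noteq> 0} \<times> {w. q w \<noteq> 0})"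
  proof
    fix w assume "w \<in> {w. ncp_mul p q w \<noteq> 0}"
    then obtain k where "p (take k w) \<noteq> 0" "q (drop k w) \<noteq> 0" using ncp_mul_nonzeroD by blast
    then show "w \<in> (\<lambda>(a, b). a @ b) ` ({w. p w \<noteq> 0} \<times> {w. q w \<noteq> 0})"
      by (intro image_eqI[of _ _ "(take k w, drop k w)"]) auto
  qed
  then show ?thesis
    using p q unfolding is_ncpoly_def by (meson finite_SigmaI finite_imageI finite_subset)
qed

lemma is_ncpoly_add: "is_ncpoly p \<Longrightarrow> is_ncpoly q \<Longrightarrow> is_ncpoly (\<lambda>w. p w + q w)"
  unfolding is_ncpoly_def by (rule finite_subset[of _ "{w. p w \<noteq> 0} \<union> {w. q w \<noteq> 0}"]) auto

lemma is_ncpoly_scale: "is_ncpoly p \<Longrightarrow> is_ncpoly (\<lambda>w. c * p w)"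
  unfolding is_ncpoly_def by (rule finite_subset[of _ "{w. p w \<noteq> 0}"]) auto

lemma is_ncpoly_diff: "is_ncpoly p \<Longrightarrow> is_ncpoly q \<Longrightarrow> is_ncpoly (\<lambda>w. p w - q w)"
  using is_ncpoly_add[OF _ is_ncpoly_scale[of q "-1"], of p] by simp

lemma is_ncpoly_zero [simp]: "is_ncpoly (\<lambda>w. 0)"
  by (simp add: is_ncpoly_def)

lemma is_ncpoly_monom: "is_ncpoly (ncp_monom u)"
  unfolding is_ncpoly_def ncp_monom_def by (rule finite_subset[of _ "{u}"]) auto

lemma is_ncpoly_const: "is_ncpoly (ncp_const c)"
  unfolding is_ncpoly_def ncp_const_def by (rule finite_subset[of _ "{[]}"]) auto

lemma is_ncpoly_one: "is_ncpoly ncp_one"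
  by (simp add: ncp_one_eq_const is_ncpoly_const)

lemma is_ncpoly_var: "is_ncpoly (ncp_var g)"
  by (simp add: ncp_var_eq_monom is_ncpoly_monom)

lemma is_ncpoly_sum:
  "finite S \<Longrightarrow> (\<And>s. s \<in> S \<Longrightarrow> is_ncpoly (f s)) \<Longrightarrow> is_ncpoly (\<lambda>v. \<Sum>s\<in>S. f s v)"
  by (induction S rule: finite_induct) (simp_all add: is_ncpoly_add)

lemma C_ideal_scale: "a \<in> C_ideal \<Longrightarrow> (\<lambda>w. c * a w) \<in> C_ideal"
  using C_ideal.lmul[of a "ncp_const c"] is_ncpoly_const by (simp add: ncp_mul_const_left)

lemma C_ideal_add': "a \<in> C_ideal \<Longrightarrow> b \<in> C_ideal \<Longrightarrow> (\<lambda>w. a w + b w) \<in> C_ideal"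
  using C_ideal.add unfolding ncp_add_def by blast

lemma C_ideal_uminus: "a \<in> C_ideal \<Longrightarrow> (\<lambda>w. - a w) \<in> C_ideal"
  using C_ideal_scale[of a "-1"] by simp

lemma C_ideal_diff: "a \<in> C_ideal \<Longrightarrow> b \<in> C_ideal \<Longrightarrow> ncp_diff a b \<in> C_ideal"
  using C_ideal_add'[OF _ C_ideal_scale[of b "-1"], of a] by (simp add: ncp_diff_def)

lemma C_ideal_const_coeff: "a \<in> C_ideal \<Longrightarrow> a [] = 0"
  by (induction rule: C_ideal.induct)
    (auto simp: C_rels_def ncp_var_def anticomm_def comm_def ncp_add_def ncp_diff_def ncp_zero_def)

section \<open>The algebra \<open>C\<close> as a quotient ring\<close>

definition ncp_cong :: "ncpoly \<Rightarrow> ncpoly \<Rightarrow> bool" where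
  "ncp_cong p q \<longleftrightarrow> is_ncpoly p \<and> is_ncpoly q \<and> ncp_diff p q \<in> C_ideal"

lemma ncp_cong_refl: "is_ncpoly p \<Longrightarrow> ncp_cong p p"
  using C_ideal.zero by (simp add: ncp_cong_def ncp_diff_def ncp_zero_def)

lemma ncp_cong_eqI: "is_ncpoly p \<Longrightarrow> q = p \<Longrightarrow> ncp_cong p q"
  by (simp add: ncp_cong_refl)

lemma ncp_cong_is_ncpoly: "ncp_cong p q \<Longrightarrow> is_ncpoly p"
  by (simp add: ncp_cong_def)

text \<open>The congruence is partial because only finitely supported coefficient functions
  represent elements of \<open>C\<close>.\<close>

quotient_type calg = ncpoly / partial: ncp_cong
proof (rule part_equivpI)
  show "\<exists>p. ncp_cong p p" using ncp_cong_refl is_ncpoly_zero by blast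
  show "symp ncp_cong"
  proof (rule sympI)
    fix p q assume "ncp_cong p q"
    moreover have "ncp_diff q p = (\<lambda>w. - ncp_diff p q w)" by (simp add: ncp_diff_def)
    ultimately show "ncp_cong q p" by (simp add: ncp_cong_def C_ideal_uminus)
  qed
  show "transp ncp_cong"
    by (rule transpI) (use C_ideal_add' in \<open>fastforce simp: ncp_cong_def ncp_diff_def\<close>)
qed

instantiation calg :: ring_1
begin

lift_definition zero_calg :: calg is "\<lambda>w. 0"
  by (simp add: ncp_cong_refl)

lift_definition one_calg :: calg is ncp_one
  by (simp add: ncp_cong_refl is_ncpoly_one)

lift_definition plus_calg :: "calg \<Rightarrow> calg \<Rightarrow> calg" is "\<lambda>p q w. p w + q w"
proof -
  fix p p' q q' assume "ncp_cong p p'" "ncp_cong q q'"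
  moreover have "ncp_diff (\<lambda>w. p w + q w) (\<lambda>w. p' w + q' w) = (\<lambda>w. ncp_diff p p' w + ncp_diff q q' w)"
    by (simp add: ncp_diff_def fun_eq_iff)
  ultimately show "ncp_cong (\<lambda>w. p w + q w) (\<lambda>w. p' w + q' w)"
    by (simp add: ncp_cong_def is_ncpoly_add C_ideal_add')
qed

lift_definition uminus_calg :: "calg \<Rightarrow> calg" is "\<lambda>p w. - p w"
proof -
  fix p p' assume "ncp_cong p p'"
  moreover have "ncp_diff (\<lambda>w. - p w) (\<lambda>w. - p' w) = (\<lambda>w. - ncp_diff p p' w)"
    by (simp add: ncp_diff_def fun_eq_iff)
  ultimately show "ncp_cong (\<lambda>w. - p w) (\<lambda>w. - p' w)"
    using is_ncpoly_scale[of _ "-1"] by (simp add: ncp_cong_def C_ideal_uminus)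
qed

lift_definition minus_calg :: "calg \<Rightarrow> calg \<Rightarrow> calg" is "\<lambda>p q w. p w - q w"
proof -
  fix p p' q q' assume "ncp_cong p p'" "ncp_cong q q'"
  moreover have "ncp_diff (\<lambda>w. p w - q w) (\<lambda>w. p' w - q' w) = ncp_diff (ncp_diff p p') (ncp_diff q q')"
    by (simp add: ncp_diff_def fun_eq_iff)
  ultimately show "ncp_cong (\<lambda>w. p w - q w) (\<lambda>w. p' w - q' w)"
    by (simp add: ncp_cong_def is_ncpoly_diff C_ideal_diff)
qed

lift_definition times_calg :: "calg \<Rightarrow> calg \<Rightarrow> calg" is ncp_mul
proof -
  fix p p' q q' assume "ncp_cong p p'" "ncp_cong q q'"
  moreover have "ncp_diff (ncp_mul p q) (ncp_mul p' q') =
      (\<lambda>w. ncp_mul (ncp_diff p p') q w + ncp_mul p' (ncp_diff q q') w)"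
    by (simp add: fun_eq_iff ncp_diff_def ncp_mul_diff_left ncp_mul_diff_right)
  ultimately show "ncp_cong (ncp_mul p q) (ncp_mul p' q')"
    by (simp add: ncp_cong_def is_ncpoly_mul C_ideal_add' C_ideal.lmul C_ideal.rmul)
qed

instance
proof
  fix a b c :: calg
  show "a + b + c = a + (b + c)"
    by transfer (auto dest: ncp_cong_is_ncpoly intro!: ncp_cong_refl is_ncpoly_add simp: algebra_simps)
  show "a + b = b + a"
    by transfer (auto dest: ncp_cong_is_ncpoly intro!: ncp_cong_refl is_ncpoly_add simp: algebra_simps)
  show "0 + a = a"
    by transfer (auto dest: ncp_cong_is_ncpoly intro!: ncp_cong_refl)
  show "- a + a = 0"
    by transfer (auto dest: ncp_cong_is_ncpoly intro!: ncp_cong_refl)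
  show "a - b = a + - b"
    by transfer (auto dest: ncp_cong_is_ncpoly intro!: ncp_cong_refl is_ncpoly_diff)
  show "a * b * c = a * (b * c)"
    by transfer (auto dest: ncp_cong_is_ncpoly intro!: ncp_cong_refl is_ncpoly_mul simp: ncp_mul_assoc)
  show "1 * a = a"
    by transfer (auto dest: ncp_cong_is_ncpoly intro!: ncp_cong_refl simp: ncp_mul_one_left)
  show "a * 1 = a"
    by transfer (auto dest: ncp_cong_is_ncpoly intro!: ncp_cong_refl simp: ncp_mul_one_right)
  show "(a + b) * c = a * c + b * c"
    by transfer (auto dest: ncp_cong_is_ncpoly intro!: ncp_cong_eqI is_ncpoly_mul is_ncpoly_add
        simp: ncp_mul_add_left)
  show "a * (b + c) = a * b + a * c"
    by transfer (auto dest: ncp_cong_is_ncpoly intro!: ncp_cong_eqI is_ncpoly_mul is_ncpoly_add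
        simp: ncp_mul_add_right)
  show "(0::calg) \<noteq> 1"
    by transfer (auto simp: ncp_cong_def ncp_diff_def ncp_one_def dest!: C_ideal_const_coeff)
qed

end

lemma abs_calg_add:
  "is_ncpoly p \<Longrightarrow> is_ncpoly q \<Longrightarrow> abs_calg (\<lambda>w. p w + q w) = abs_calg p + abs_calg q"
  using plus_calg.abs_eq ncp_cong_refl by metis

lemma abs_calg_diff:
  "is_ncpoly p \<Longrightarrow> is_ncpoly q \<Longrightarrow> abs_calg (\<lambda>w. p w - q w) = abs_calg p - abs_calg q"
  using minus_calg.abs_eq ncp_cong_refl by metis

lemma abs_calg_mul:
  "is_ncpoly p \<Longrightarrow> is_ncpoly q \<Longrightarrow> abs_calg (ncp_mul p q) = abs_calg p * abs_calg q"
  using times_calg.abs_eq ncp_cong_refl by metis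

lemma abs_calg_zero: "abs_calg (\<lambda>w. 0) = 0"
  by (simp add: zero_calg.abs_eq)

lemma abs_calg_eq_iff:
  "is_ncpoly p \<Longrightarrow> is_ncpoly q \<Longrightarrow> abs_calg p = abs_calg q \<longleftrightarrow> ncp_diff p q \<in> C_ideal"
  using Quotient3_rel[OF Quotient3_calg, of p q] ncp_cong_refl unfolding ncp_cong_def by blast

lemma abs_calg_cases:
  obtains q where "is_ncpoly q" and "t = abs_calg q"
  using Quotient3_abs_rep[OF Quotient3_calg, of t] Quotient3_rep_reflp[OF Quotient3_calg, of t]
  unfolding ncp_cong_def by metis

lemma abs_calg_ideal: "r \<in> C_ideal \<Longrightarrow> is_ncpoly r \<Longrightarrow> abs_calg r = 0"
  using abs_calg_eq_iff[of r "\<lambda>w. 0"] by (simp add: abs_calg_zero ncp_diff_def)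

lemma abs_calg_sum:
  "finite S \<Longrightarrow> (\<And>s. s \<in> S \<Longrightarrow> is_ncpoly (f s)) \<Longrightarrow>
    abs_calg (\<lambda>v. \<Sum>s\<in>S. f s v) = (\<Sum>s\<in>S. abs_calg (f s))"
  by (induction S rule: finite_induct) (simp_all add: abs_calg_zero abs_calg_add is_ncpoly_sum)

definition calg_of_complex :: "complex \<Rightarrow> calg" where
  "calg_of_complex c = abs_calg (ncp_const c)"

lemma calg_of_complex_mult: "calg_of_complex a * calg_of_complex b = calg_of_complex (a * b)"
proof -
  have "ncp_mul (ncp_const a) (ncp_const b) = ncp_const (a * b)"
    unfolding ncp_mul_const_left by (simp add: ncp_const_def fun_eq_iff)
  then show ?thesis
    unfolding calg_of_complex_def by (metis abs_calg_mul is_ncpoly_const)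
qed

lemma calg_of_complex_one: "calg_of_complex 1 = 1"
  by (simp add: calg_of_complex_def one_calg.abs_eq flip: ncp_one_eq_const)

lemma calg_of_complex_power: "calg_of_complex a ^ m = calg_of_complex (a ^ m)"
  by (induction m) (simp_all add: calg_of_complex_one calg_of_complex_mult)

lemma calg_of_complex_commute: "calg_of_complex c * t = t * calg_of_complex c"
proof -
  obtain q where q: "is_ncpoly q" "t = abs_calg q" by (rule abs_calg_cases)
  have "ncp_mul (ncp_const c) q = ncp_mul q (ncp_const c)"
    by (simp add: ncp_mul_const_left ncp_mul_const_right fun_eq_iff)
  then show ?thesis
    unfolding calg_of_complex_def q(2) using abs_calg_mul q(1) is_ncpoly_const by metis
qed

lemma abs_calg_scale: "is_ncpoly p \<Longrightarrow> abs_calg (\<lambda>w. c * p w) = calg_of_complex c * abs_calg p"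
  unfolding calg_of_complex_def ncp_mul_const_left[symmetric] by (simp add: abs_calg_mul is_ncpoly_const)

definition cvar :: "gen \<Rightarrow> calg" where
  "cvar g = abs_calg (ncp_var g)"

lemma abs_calg_monom_Cons: "abs_calg (ncp_monom (g # u)) = cvar g * abs_calg (ncp_monom u)"
  by (simp add: ncp_monom_Cons cvar_def abs_calg_mul is_ncpoly_var is_ncpoly_monom)

lemma abs_calg_monom_pair: "abs_calg (ncp_monom [g, h]) = cvar g * cvar h"
  by (simp add: ncp_monom_pair cvar_def abs_calg_mul is_ncpoly_var)

lemma abs_calg_expansion:
  assumes q: "is_ncpoly q"
  shows "abs_calg q = (\<Sum>u\<in>{u. q u \<noteq> 0}. calg_of_complex (q u) * abs_calg (ncp_monom u))"
proof -
  let ?S = "{u. q u \<noteq> 0}"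
  have fin: "finite ?S" using q unfolding is_ncpoly_def .
  have expand: "(\<lambda>v. \<Sum>u\<in>?S. q u * ncp_monom u v) = q"
  proof
    fix v
    have "(\<Sum>u\<in>?S. q u * ncp_monom u v) = (\<Sum>u\<in>?S. if u = v then q v else 0)"
      by (rule sum.cong) (auto simp: ncp_monom_def)
    also have "\<dots> = q v" using fin by (simp add: sum.delta')
    finally show "(\<Sum>u\<in>?S. q u * ncp_monom u v) = q v" .
  qed
  have "abs_calg q = abs_calg (\<lambda>v. \<Sum>u\<in>?S. q u * ncp_monom u v)"
    by (simp only: expand)
  also have "\<dots> = (\<Sum>u\<in>?S. abs_calg (\<lambda>v. q u * ncp_monom u v))"
    by (rule abs_calg_sum[OF fin]) (simp add: is_ncpoly_scale is_ncpoly_monom)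
  also have "\<dots> = (\<Sum>u\<in>?S. calg_of_complex (q u) * abs_calg (ncp_monom u))"
    by (simp add: abs_calg_scale is_ncpoly_monom)
  finally show ?thesis .
qed

lemma central_if_commutes_with_cvar:
  assumes gens: "\<And>g. c * cvar g = cvar g * c"
  shows "c * t = t * c"
proof -
  have monom: "c * abs_calg (ncp_monom u) = abs_calg (ncp_monom u) * c" for u
  proof (induction u)
    case Nil
    show ?case by (simp add: ncp_monom_Nil flip: one_calg.abs_eq)
  next
    case (Cons g u)
    show ?case unfolding abs_calg_monom_Cons by (metis Cons.IH gens mult.assoc)
  qed
  obtain q where q: "is_ncpoly q" "t = abs_calg q" by (rule abs_calg_cases)
  have "c * t = (\<Sum>u\<in>{u. q u \<noteq> 0}. c * (calg_of_complex (q u) * abs_calg (ncp_monom u)))"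
    unfolding q(2) abs_calg_expansion[OF q(1)] by (simp add: sum_distrib_left)
  also have "\<dots> = (\<Sum>u\<in>{u. q u \<noteq> 0}. calg_of_complex (q u) * abs_calg (ncp_monom u) * c)"
    by (intro sum.cong refl) (metis monom calg_of_complex_commute mult.assoc)
  also have "\<dots> = t * c"
    unfolding q(2) abs_calg_expansion[OF q(1)] by (simp add: sum_distrib_right)
  finally show ?thesis .
qed

lemma abs_calg_C_rels: "r \<in> C_rels \<Longrightarrow> abs_calg r = 0"
  by (rule abs_calg_ideal[OF C_ideal.gen])
    (auto simp: C_rels_def comm_def anticomm_def ncp_diff_def ncp_add_def
        intro!: is_ncpoly_mul is_ncpoly_var is_ncpoly_add is_ncpoly_diff)

lemma abs_calg_comm_anticomm:
  "abs_calg (comm (anticomm (ncp_var a) (ncp_var b)) (ncp_var c)) =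
     (cvar a * cvar b + cvar b * cvar a) * cvar c - cvar c * (cvar a * cvar b + cvar b * cvar a)"
  unfolding comm_def anticomm_def ncp_diff_def ncp_add_def cvar_def
  by (simp add: abs_calg_diff abs_calg_add abs_calg_mul is_ncpoly_mul is_ncpoly_add is_ncpoly_var)

lemma cvar_square_zero: "g \<noteq> Y \<Longrightarrow> cvar g * cvar g = 0"
  using abs_calg_C_rels[of "ncp_mul (ncp_var g) (ncp_var g)"]
  by (cases g) (auto simp: C_rels_def cvar_def abs_calg_mul is_ncpoly_var)

lemma anticomm_XZ_central:
  "(cvar X * cvar Z + cvar Z * cvar X) * t = t * (cvar X * cvar Z + cvar Z * cvar X)"
proof (rule central_if_commutes_with_cvar)
  have XX: "cvar X * (cvar X * s) = 0" and ZZ: "cvar Z * (cvar Z * s) = 0" for s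
    by (simp_all add: cvar_square_zero flip: mult.assoc)
  fix g
  show "(cvar X * cvar Z + cvar Z * cvar X) * cvar g = cvar g * (cvar X * cvar Z + cvar Z * cvar X)"
  proof (cases g)
    case Y
    have "(cvar X * cvar Z + cvar Z * cvar X) * cvar Y - cvar Y * (cvar X * cvar Z + cvar Z * cvar X) =
        - (abs_calg (comm (anticomm (ncp_var X) (ncp_var Y)) (ncp_var Z))
           + abs_calg (comm (anticomm (ncp_var Y) (ncp_var Z)) (ncp_var X)))"
      unfolding abs_calg_comm_anticomm by (simp add: algebra_simps)
    also have "\<dots> = 0" by (simp add: abs_calg_C_rels C_rels_def)
    finally show ?thesis using Y by simp
  qed (simp_all add: algebra_simps cvar_square_zero XX ZZ)
qed

section \<open>A power identity in rings\<close>

lemma power_mult_commuting: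
  fixes x y :: "'a::monoid_mult"
  assumes "x * y = y * x"
  shows "(x * y) ^ n = x ^ n * y ^ n"
proof (induction n)
  case (Suc n)
  have "(x * y) ^ Suc n = x ^ n * (y ^ n * x) * y"
    by (simp only: power_Suc2 Suc mult.assoc)
  also have "\<dots> = x ^ Suc n * y ^ Suc n"
    by (simp only: power_commuting_commutes[OF assms[symmetric]] mult.assoc power_Suc2)
  finally show ?case .
qed simp

lemma power_add_orthogonal:
  fixes a b :: "'a::semiring_1"
  assumes "a * b = 0" and "b * a = 0"
  shows "(a + b) ^ Suc m = a ^ Suc m + b ^ Suc m"
proof (induction m)
  case (Suc m)
  have "a ^ Suc m * b = 0" "b ^ Suc m * a = 0"
    by (simp_all add: power_Suc2 mult.assoc assms del: power_Suc)
  then show ?case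
    by (simp add: Suc distrib_left distrib_right power_Suc2[of _ "Suc m"] del: power_Suc)
qed simp

lemma power_twisted_anticomm:
  fixes a b s :: "'a::ring_1"
  assumes aa: "a * a = 0" and bb: "b * b = 0" and sa: "s * a = a * s" and sb: "s * b = b * s"
  shows "(a * b + s * (b * a)) ^ Suc m = (a * b) ^ Suc m + s ^ Suc m * (b * a) ^ Suc m"
proof -
  have "a * b * (s * (b * a)) = a * (b * s) * (b * a)" by (simp only: mult.assoc)
  also have "\<dots> = a * (s * b) * (b * a)" by (simp only: sb)
  also have "\<dots> = a * s * (b * b) * a" by (simp only: mult.assoc)
  finally have ab_sba: "a * b * (s * (b * a)) = 0" by (simp add: bb)
  have "s * (b * a) * (a * b) = s * (b * (a * a) * b)" by (simp only: mult.assoc)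
  then have sba_ab: "s * (b * a) * (a * b) = 0" by (simp add: aa)
  have "s * (b * a) = (s * b) * a" by (simp only: mult.assoc)
  also have "\<dots> = b * (s * a)" by (simp only: sb mult.assoc)
  also have "\<dots> = (b * a) * s" by (simp only: sa mult.assoc)
  finally have s_ba: "s * (b * a) = (b * a) * s" .
  have "(a * b + s * (b * a)) ^ Suc m = (a * b) ^ Suc m + (s * (b * a)) ^ Suc m"
    by (rule power_add_orthogonal[OF ab_sba sba_ab])
  also have "(s * (b * a)) ^ Suc m = s ^ Suc m * (b * a) ^ Suc m"
    by (rule power_mult_commuting[OF s_ba])
  finally show ?thesis .
qed

lemma cvar_twisted_anticomm_power:
  assumes "n > 0" and "lam ^ n = 1"
  shows "(cvar X * cvar Z + calg_of_complex lam * (cvar Z * cvar X)) ^ n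
       = (cvar X * cvar Z + cvar Z * cvar X) ^ n"
proof -
  obtain m where n: "n = Suc m" using assms(1) not0_implies_Suc by blast
  have "(cvar X * cvar Z + calg_of_complex s * (cvar Z * cvar X)) ^ n
      = (cvar X * cvar Z) ^ n + calg_of_complex (s ^ n) * (cvar Z * cvar X) ^ n" for s
    unfolding n calg_of_complex_power[symmetric]
    by (rule power_twisted_anticomm) (simp_all add: cvar_square_zero calg_of_complex_commute)
  from this[of lam] this[of 1] show ?thesis
    using assms(2) by (simp add: calg_of_complex_one)
qed

section \<open>The smash product\<close>

definition sm_single :: "nat \<Rightarrow> ncpoly \<Rightarrow> smash" where
  "sm_single a p = (\<lambda>k. if k = a then p else ncp_zero)"

lemma sigma_pow_zero [simp]: "sigma_pow lam i (\<lambda>w. 0) = (\<lambda>w. 0)"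
  by (simp add: sigma_pow_def)

lemma sigma_pow_0 [simp]: "sigma_pow lam 0 p = p"
  by (simp add: sigma_pow_def)

lemma sm_mul_single:
  assumes "a < n" "b < n"
  shows "sm_mul n lam (sm_single a p) (sm_single b q) =
         sm_single ((a + b) mod n) (ncp_mul p (sigma_pow lam a q))"
proof
  fix k
  show "sm_mul n lam (sm_single a p) (sm_single b q) k =
        sm_single ((a + b) mod n) (ncp_mul p (sigma_pow lam a q)) k"
  proof (cases "k < n")
    case False
    with assms show ?thesis unfolding sm_mul_def sm_single_def by auto
  next
    case True
    have inner: "(\<Sum>j\<in>{j. j < n \<and> (i + j) mod n = k}.
          ncp_mul (sm_single a p i) (sigma_pow lam i (sm_single b q j)) w) =
        (if i = a \<and> (a + b) mod n = k then ncp_mul p (sigma_pow lam a q) w else 0)" for i w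
    proof (cases "i = a")
      case True
      have "(\<Sum>j\<in>{j. j < n \<and> (i + j) mod n = k}.
              ncp_mul (sm_single a p i) (sigma_pow lam i (sm_single b q j)) w) =
            (\<Sum>j\<in>{j. j < n \<and> (i + j) mod n = k}. if j = b then ncp_mul p (sigma_pow lam a q) w else 0)"
        by (rule sum.cong) (auto simp: sm_single_def ncp_zero_def True)
      also have "\<dots> = (if (a + b) mod n = k then ncp_mul p (sigma_pow lam a q) w else 0)"
        using assms by (simp add: sum.delta' True)
      finally show ?thesis using True by simp
    qed (simp add: sm_single_def ncp_zero_def)
    show ?thesis using True assms
      by (simp only: sm_mul_def inner if_True)
        (simp add: sum.delta' sm_single_def fun_eq_iff ncp_zero_def)
  qed
qed

definition ncp_balanced :: "ncpoly \<Rightarrow> bool" where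
  "ncp_balanced p \<longleftrightarrow> (\<forall>w. p w \<noteq> 0 \<longrightarrow> count_list w Z = count_list w X)"

lemma sigma_pow_balanced: "ncp_balanced p \<Longrightarrow> sigma_pow lam i p = p"
  unfolding sigma_pow_def ncp_balanced_def by (rule ext) (metis diff_self mult_cancel_right2 mult_zero_right power_int_0_right)

lemma ncp_balanced_one: "ncp_balanced ncp_one"
  by (simp add: ncp_balanced_def ncp_one_def)

lemma ncp_balanced_mul: "ncp_balanced p \<Longrightarrow> ncp_balanced q \<Longrightarrow> ncp_balanced (ncp_mul p q)"
  unfolding ncp_balanced_def
  by (metis append_take_drop_id count_list_append ncp_mul_nonzeroD)

primrec ncp_power :: "ncpoly \<Rightarrow> nat \<Rightarrow> ncpoly" where
  "ncp_power u 0 = ncp_one"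
| "ncp_power u (Suc m) = ncp_mul (ncp_power u m) u"

lemma is_ncpoly_power: "is_ncpoly u \<Longrightarrow> is_ncpoly (ncp_power u m)"
  by (induction m) (simp_all add: is_ncpoly_one is_ncpoly_mul)

lemma ncp_balanced_power: "ncp_balanced u \<Longrightarrow> ncp_balanced (ncp_power u m)"
  by (induction m) (simp_all add: ncp_balanced_one ncp_balanced_mul)

lemma abs_calg_power: "is_ncpoly u \<Longrightarrow> abs_calg (ncp_power u m) = abs_calg u ^ m"
  by (induction m) (simp_all add: is_ncpoly_power abs_calg_mul power_commutes flip: one_calg.abs_eq)

lemma sm_pow_single:
  assumes "n > 0" and "ncp_balanced u"
  shows "sm_pow n lam (sm_single (n - 1) u) m = sm_single (m * (n - 1) mod n) (ncp_power u m)"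
proof (induction m)
  case 0
  show ?case by (simp add: sm_one_def sm_single_def fun_eq_iff)
next
  case (Suc m)
  have "sm_pow n lam (sm_single (n - 1) u) (Suc m) =
      sm_single ((m * (n - 1) mod n + (n - 1)) mod n)
        (ncp_mul (ncp_power u m) (sigma_pow lam (m * (n - 1) mod n) u))"
    unfolding sm_pow.simps Suc using assms(1) by (intro sm_mul_single) auto
  also have "\<dots> = sm_single (Suc m * (n - 1) mod n) (ncp_power u (Suc m))"
    by (simp add: sigma_pow_balanced[OF assms(2)] mod_add_left_eq add.commute mod_add_right_eq)
  finally show ?case .
qed

lemma sm_mul_single_0_left:
  assumes "k < n"
  shows "sm_mul n lam (sm_single 0 c) Q k = ncp_mul c (Q k)"
proof
  fix w
  have inner: "(\<Sum>j\<in>{j. j < n \<and> (i + j) mod n = k}.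
      ncp_mul (sm_single 0 c i) (sigma_pow lam i (Q j)) w) =
    (if i = 0 then ncp_mul c (Q k) w else 0)" for i
  proof (cases "i = 0")
    case True
    then have "{j. j < n \<and> (i + j) mod n = k} = {k}" using assms by auto
    then show ?thesis using True by (simp add: sm_single_def)
  qed (simp add: sm_single_def ncp_zero_def)
  show "sm_mul n lam (sm_single 0 c) Q k w = ncp_mul c (Q k) w"
    using assms by (simp only: sm_mul_def inner if_True) simp
qed

lemma sm_mul_single_0_right:
  assumes "k < n" and "ncp_balanced c"
  shows "sm_mul n lam Q (sm_single 0 c) k = ncp_mul (Q k) c"
proof
  fix w
  have inner: "(\<Sum>j\<in>{j. j < n \<and> (i + j) mod n = k}.
      ncp_mul (Q i) (sigma_pow lam i (sm_single 0 c j)) w) =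
    (if i = k then ncp_mul (Q k) c w else 0)" if "i < n" for i
  proof -
    have "(\<Sum>j\<in>{j. j < n \<and> (i + j) mod n = k}.
        ncp_mul (Q i) (sigma_pow lam i (sm_single 0 c j)) w) =
      (\<Sum>j\<in>{j. j < n \<and> (i + j) mod n = k}. if j = 0 then ncp_mul (Q i) c w else 0)"
      by (rule sum.cong) (auto simp: sm_single_def ncp_zero_def sigma_pow_balanced[OF assms(2)])
    also have "\<dots> = (if i = k then ncp_mul (Q k) c w else 0)"
      using that assms by (simp add: sum.delta')
    finally show ?thesis .
  qed
  show "sm_mul n lam Q (sm_single 0 c) k w = ncp_mul (Q k) c w"
    using assms unfolding sm_mul_def by (simp add: inner)
qed

lemma sm_center_single_0:
  assumes "is_ncpoly c" and "ncp_balanced c" and central: "\<And>t. abs_calg c * t = t * abs_calg c"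
  shows "sm_center n lam (sm_single 0 c)"
  unfolding sm_center_def sm_eq_def
proof (intro allI impI)
  fix Q k assume Q: "sm_elem n Q" and k: "k < n"
  have "is_ncpoly (Q k)" using Q unfolding sm_elem_def by simp
  moreover have "abs_calg (ncp_mul c (Q k)) = abs_calg (ncp_mul (Q k) c)"
    using abs_calg_mul assms(1) \<open>is_ncpoly (Q k)\<close> central by metis
  ultimately show "ncp_diff (sm_mul n lam (sm_single 0 c) Q k) (sm_mul n lam Q (sm_single 0 c) k) \<in> C_ideal"
    unfolding sm_mul_single_0_left[OF k] sm_mul_single_0_right[OF k assms(2)]
    using abs_calg_eq_iff is_ncpoly_mul assms(1) by metis
qed

lemma sigma_pow_var_X:
  assumes "n > 0" and "lam ^ n = 1"
  shows "sigma_pow lam (n - 1) (ncp_var X) = (\<lambda>w. lam * ncp_var X w)"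
proof -
  have "lam ^ (n - 1) * lam = 1"
    using assms by (metis power_minus_mult)
  then have "inverse (lam ^ (n - 1)) = lam"
    by (rule inverse_unique)
  then show ?thesis
    by (simp add: fun_eq_iff sigma_pow_def ncp_var_def power_int_minus)
qed

lemma sm_add_single: "sm_add (sm_single a p) (sm_single a q) = sm_single a (\<lambda>w. p w + q w)"
  by (auto simp: sm_add_def sm_single_def ncp_add_def ncp_zero_def)

lemma x'_z'_anticomm:
  assumes "n > 0" and "lam ^ n = 1"
  shows "sm_add (sm_mul n lam x' (z' n)) (sm_mul n lam (z' n) x') =
         sm_single (n - 1) (\<lambda>w. ncp_monom [X, Z] w + lam * ncp_monom [Z, X] w)"
proof -
  have x': "x' = sm_single 0 (ncp_var X)" and z': "z' n = sm_single (n - 1) (ncp_var Z)"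
    by (auto simp: x'_def z'_def sm_single_def)
  have "sm_mul n lam x' (z' n) = sm_single (n - 1) (ncp_monom [X, Z])"
    unfolding x' z' using assms(1) by (simp add: sm_mul_single ncp_monom_pair)
  moreover have "sm_mul n lam (z' n) x' =
      sm_single ((n - 1 + 0) mod n) (ncp_mul (ncp_var Z) (sigma_pow lam (n - 1) (ncp_var X)))"
    unfolding x' z' using assms(1) by (intro sm_mul_single) auto
  moreover have "\<dots> = sm_single (n - 1) (\<lambda>w. lam * ncp_monom [Z, X] w)"
    unfolding sigma_pow_var_X[OF assms] using assms(1) by (simp add: ncp_mul_scale_right ncp_monom_pair)
  ultimately show ?thesis by (simp add: sm_add_single)
qed

theorem mainTheorem17:
  fixes n :: nat and lam :: complex
  assumes "n > 0" and "lam ^ n = 1" and "\<forall>k. 0 < k \<and> k < n \<longrightarrow> lam ^ k \<noteq> 1"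
  shows "sm_center n lam
           (sm_pow n lam (sm_add (sm_mul n lam x' (z' n)) (sm_mul n lam (z' n) x')) n)"
proof -
  define u where "u = (\<lambda>w. ncp_monom [X, Z] w + lam * ncp_monom [Z, X] w)"
  have u_poly: "is_ncpoly u"
    unfolding u_def by (intro is_ncpoly_add is_ncpoly_scale is_ncpoly_monom)
  have u_balanced: "ncp_balanced u"
    by (simp add: u_def ncp_balanced_def ncp_monom_def)
  have "abs_calg u = cvar X * cvar Z + calg_of_complex lam * (cvar Z * cvar X)"
    by (simp add: u_def abs_calg_add abs_calg_scale is_ncpoly_monom is_ncpoly_scale abs_calg_monom_pair)
  then have "abs_calg (ncp_power u n) = (cvar X * cvar Z + cvar Z * cvar X) ^ n"
    by (simp add: abs_calg_power u_poly cvar_twisted_anticomm_power[OF assms(1,2)])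
  then have "sm_center n lam (sm_single 0 (ncp_power u n))"
    by (intro sm_center_single_0 is_ncpoly_power ncp_balanced_power u_poly u_balanced)
      (simp add: anticomm_XZ_central power_commuting_commutes)
  moreover have "n * (n - 1) mod n = 0" by simp
  ultimately show ?thesis
    unfolding x'_z'_anticomm[OF assms(1,2), folded u_def] sm_pow_single[OF assms(1) u_balanced]
    by simp
qed

end
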